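(* Let $R$ be a commutative ring and let $C^i_{jk}\in R$ ($1\le i,j,k\le n$) satisfy $C^i_{jk}=-C^i_{kj}$ and $\sum_\alpha\bigl(C^\alpha_{ij}C^l_{\alpha k}+C^\alpha_{jk}C^l_{\alpha i}+C^\alpha_{ki}C^l_{\alpha j}\bigr)=0$ for all $i,j,k,l$. In the polynomial ring $R[\partial^1,\dots,\partial^n]$ let $\mathbf C^i_j:=\sum_k C^i_{jk}\partial^k$ and let $\delta_\rho$ denote the partial derivative with respect to $\partial^\rho$. Then for every $L\ge0$ and all $1\le\mu,\nu,\gamma\le n$: $$\sum_{\rho,\sigma}\Bigl(\mathbf C^\rho_\nu C^\sigma_{\mu\rho}(\mathbf C^L)^\gamma_\sigma-\mathbf C^\rho_\mu C^\sigma_{\nu\rho}(\mathbf C^L)^\gamma_\sigma\Bigr)=\sum_\sigma C^\sigma_{\mu\nu}(\mathbf C^{L+1})^\gamma_\sigma,$$ $$\sum_\rho\Bigl(C^\gamma_{\mu\rho}(\mathbf C^L)^\rho_\nu+\mathbf C^\rho_\nu\,\delta_\rho\bigl((\mathbf C^L)^\gamma_\mu\bigr)-C^\gamma_{\nu\rho}(\mathbf C^L)^\rho_\mu-\mathbf C^\rho_\mu\,\delta_\rho\bigl((\mathbf C^L)^\gamma_\nu\bigr)\Bigr)=2\sum_\sigma C^\sigma_{\mu\nu}(\mathbf C^L)^\gamma_\sigma.$$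
   Context: $\mathbf C^L$ is the $L$-th matrix power of the matrix $(\mathbf C^i_j)$ with entries in $R[\partial^1,\dots,\partial^n]$, $\mathbf C^0$ the identity matrix. *)

theory Defs
  imports Main "HOL-Library.Poly_Mapping"
begin

text \<open>Polynomials in the commuting variables \<open>\<partial>^1, \<partial>^2, \<dots>\<close> over a commutative ring:
  finitely supported maps from monomials (finitely supported exponent vectors
  \<open>nat \<Rightarrow>\<^sub>0 nat\<close>) to coefficients, with convolution product.\<close>

type_synonym 'a dpoly = "(nat \<Rightarrow>\<^sub>0 nat) \<Rightarrow>\<^sub>0 'a"

definition dvar :: "nat \<Rightarrow> 'a::comm_ring_1 dpoly" where
  "dvar k = Poly_Mapping.single (Poly_Mapping.single k 1) 1"

definition pdiff :: "nat \<Rightarrow> 'a::comm_ring_1 dpoly \<Rightarrow> 'a dpoly" where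
  "pdiff \<rho> p = (\<Sum>m\<in>Poly_Mapping.keys p. Poly_Mapping.single (m - Poly_Mapping.single \<rho> (1::nat))
                               (of_nat (Poly_Mapping.lookup (m::nat \<Rightarrow>\<^sub>0 nat) \<rho>) * Poly_Mapping.lookup p m))"

text \<open>The matrix \<open>\<^bold>C^i_j = \<Sum>_k C^i_{jk} \<partial>^k\<close> (row index \<open>i\<close>, column index \<open>j\<close>),
  with \<open>C i j k\<close> standing for \<open>C^i_{jk}\<close>.\<close>
definition Cmat :: "nat \<Rightarrow> (nat \<Rightarrow> nat \<Rightarrow> nat \<Rightarrow> 'a::comm_ring_1) \<Rightarrow> nat \<Rightarrow> nat \<Rightarrow> 'a dpoly" where
  "Cmat n C i j = (\<Sum>k\<in>{1..n}. Poly_Mapping.single 0 (C i j k) * dvar k)"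

fun Cpow :: "nat \<Rightarrow> (nat \<Rightarrow> nat \<Rightarrow> nat \<Rightarrow> 'a::comm_ring_1) \<Rightarrow> nat \<Rightarrow> nat \<Rightarrow> nat \<Rightarrow> 'a dpoly" where
  "Cpow n C 0 i j = (if i = j then 1 else 0)"
| "Cpow n C (Suc L) i j = (\<Sum>k\<in>{1..n}. Cpow n C L i k * Cmat n C k j)"

end

theory Submission
  imports Defs
begin

text \<open>For each \<open>\<nu>\<close>, \<open>E\<^sub>\<nu> = \<Sum>\<^sub>\<rho> \<^bold>C^\<rho>_\<nu> \<delta>\<^sub>\<rho>\<close> is a derivation of \<open>R[\<partial>]\<close>. Let \<open>ad\<^sub>\<nu>\<close> be the
  constant matrix \<open>(ad\<^sub>\<nu>)^i_j = C^i_{\<nu>j}\<close>. Together with antisymmetry, the Jacobi identity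
  says \<open>[ad\<^sub>\<mu>, ad\<^sub>\<nu>] = \<Sum>\<^sub>t C^t_{\<mu>\<nu>} ad\<^sub>t\<close>; comparing coefficients of each \<open>\<partial>^k\<close>, this
  gives \<open>E\<^sub>\<nu>(\<^bold>C) = [ad\<^sub>\<nu>, \<^bold>C]\<close> entrywise. A commutator with a fixed matrix is a derivation
  of the matrix product, hence \<open>E\<^sub>\<nu>(\<^bold>C^L) = [ad\<^sub>\<nu>, \<^bold>C^L]\<close> for all \<open>L\<close>. Substituting this for
  both derivative terms of the second identity leaves
  \<open>\<Sum>\<^sub>\<sigma> (C^\<sigma>_{\<mu>\<nu>} - C^\<sigma>_{\<nu>\<mu>}) (\<^bold>C^L)^\<gamma>_\<sigma>\<close>, twice the right-hand side by antisymmetry.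
  The first identity is the Jacobi identity in the same form, contracted with \<open>\<^bold>C^L\<close>.\<close>

lemma minus_single_eq_iff:
  fixes a m :: "nat \<Rightarrow>\<^sub>0 nat"
  assumes "Poly_Mapping.lookup a r \<ge> 1"
  shows "a - Poly_Mapping.single r 1 = m \<longleftrightarrow> a = m + Poly_Mapping.single r 1"
  using assms
  by (auto simp: poly_mapping_eq_iff fun_eq_iff lookup_minus lookup_add lookup_single when_def)

lemma lookup_pdiff:
  "Poly_Mapping.lookup (pdiff r p) m
     = of_nat (Poly_Mapping.lookup m r + 1) * Poly_Mapping.lookup p (m + Poly_Mapping.single r 1)"
proof -
  let ?s = "Poly_Mapping.single r (1::nat)"
  let ?c = "\<lambda>m'. of_nat (Poly_Mapping.lookup m' r) * Poly_Mapping.lookup p m'"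
  have "Poly_Mapping.lookup (pdiff r p) m = (\<Sum>m'\<in>Poly_Mapping.keys p. ?c m' when m' - ?s = m)"
    by (simp add: pdiff_def lookup_sum lookup_single when_def eq_commute)
  also have "\<dots> = (\<Sum>m'\<in>Poly_Mapping.keys p. ?c m' when m' = m + ?s)"
  proof (rule sum.cong[OF refl])
    fix m'
    show "(?c m' when m' - ?s = m) = (?c m' when m' = m + ?s)"
      by (cases "Poly_Mapping.lookup m' r = 0")
        (use minus_single_eq_iff[of m' r m] in \<open>auto simp: when_def lookup_add\<close>)
  qed
  also have "\<dots> = ?c (m + ?s)"
    by (simp add: when_def in_keys_iff)
  finally show ?thesis
    by (simp add: lookup_add)
qed

lemma pdiff_add: "pdiff r (p + q) = pdiff r p + pdiff r q"
  by (rule poly_mapping_eqI) (simp add: lookup_pdiff lookup_add algebra_simps)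

lemma pdiff_zero: "pdiff r 0 = 0"
  by (simp add: pdiff_def)

lemma pdiff_sum: "pdiff r (\<Sum>i\<in>A. f i) = (\<Sum>i\<in>A. pdiff r (f i))"
  by (induction A rule: infinite_finite_induct) (simp_all add: pdiff_zero pdiff_add)

lemma pdiff_single:
  "pdiff r (Poly_Mapping.single a c)
     = Poly_Mapping.single (a - Poly_Mapping.single r 1) (of_nat (Poly_Mapping.lookup a r) * c)"
proof (cases "c = 0")
  case False
  then show ?thesis
    by (simp add: pdiff_def)
qed (simp add: pdiff_def)

lemma pdiff_const: "pdiff r (Poly_Mapping.single 0 c) = 0"
  by (simp add: pdiff_single)

text \<open>When the variable does not occur in \<open>a\<close>, the truncated subtraction
  \<open>a - \<partial>^r\<close> is harmless because the coefficient vanishes.\<close>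
lemma single_minus_var_mult:
  "Poly_Mapping.single (a - Poly_Mapping.single r 1) (of_nat (Poly_Mapping.lookup a r) * c)
     * Poly_Mapping.single b d
   = Poly_Mapping.single (a + b - Poly_Mapping.single r 1) (of_nat (Poly_Mapping.lookup a r) * c * d)"
proof (cases "Poly_Mapping.lookup a r = 0")
  case False
  then have "a - Poly_Mapping.single r 1 + b = a + b - Poly_Mapping.single r 1"
    by (auto simp: poly_mapping_eq_iff fun_eq_iff lookup_minus lookup_add lookup_single when_def)
  then show ?thesis
    by (simp add: mult_single)
qed simp

lemma pdiff_mult_single:
  "pdiff r (Poly_Mapping.single a c * Poly_Mapping.single b d)
     = pdiff r (Poly_Mapping.single a c) * Poly_Mapping.single b d
       + Poly_Mapping.single a c * pdiff r (Poly_Mapping.single b d)"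
  using single_minus_var_mult[of a r c b d] single_minus_var_mult[of b r d a c]
  by (simp add: pdiff_single mult_single lookup_add algebra_simps flip: single_add)

lemma poly_mapping_sum_monomials:
  "p = (\<Sum>m\<in>Poly_Mapping.keys p. Poly_Mapping.single m (Poly_Mapping.lookup p m))"
  by (rule poly_mapping_eqI) (simp add: lookup_sum lookup_single when_def in_keys_iff)

lemma pdiff_mult: "pdiff r (p * q) = pdiff r p * q + p * pdiff r q"
proof -
  let ?P = "\<lambda>a. Poly_Mapping.single a (Poly_Mapping.lookup p a)"
  let ?Q = "\<lambda>b. Poly_Mapping.single b (Poly_Mapping.lookup q b)"
  have "pdiff r (p * q) = pdiff r ((\<Sum>a\<in>Poly_Mapping.keys p. ?P a) * (\<Sum>b\<in>Poly_Mapping.keys q. ?Q b))"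
    by (simp flip: poly_mapping_sum_monomials)
  also have "\<dots> = (\<Sum>a\<in>Poly_Mapping.keys p. \<Sum>b\<in>Poly_Mapping.keys q. pdiff r (?P a) * ?Q b + ?P a * pdiff r (?Q b))"
    by (simp add: sum_product pdiff_sum pdiff_mult_single)
  also have "\<dots> = pdiff r (\<Sum>a\<in>Poly_Mapping.keys p. ?P a) * (\<Sum>b\<in>Poly_Mapping.keys q. ?Q b)
      + (\<Sum>a\<in>Poly_Mapping.keys p. ?P a) * pdiff r (\<Sum>b\<in>Poly_Mapping.keys q. ?Q b)"
    by (simp add: sum_product pdiff_sum sum.distrib)
  finally show ?thesis
    by (simp flip: poly_mapping_sum_monomials)
qed

lemma pdiff_dvar: "pdiff r (dvar k) = (if k = r then 1 else 0)"
  by (simp add: dvar_def pdiff_single lookup_single)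

abbreviation dconst :: "'a::comm_ring_1 \<Rightarrow> 'a dpoly" where
  "dconst c \<equiv> Poly_Mapping.single 0 c"

definition linform :: "nat \<Rightarrow> (nat \<Rightarrow> 'a::comm_ring_1) \<Rightarrow> 'a dpoly" where
  "linform n a = (\<Sum>k\<in>{1..n}. dconst (a k) * dvar k)"

lemma Cmat_eq_linform: "Cmat n C i j = linform n (C i j)"
  by (simp add: Cmat_def linform_def)

lemma linform_cong: "(\<And>k. k \<in> {1..n} \<Longrightarrow> a k = b k) \<Longrightarrow> linform n a = linform n b"
  by (simp add: linform_def)

lemma single_sum: "Poly_Mapping.single k (\<Sum>i\<in>A. f i) = (\<Sum>i\<in>A. Poly_Mapping.single k (f i))"
  by (induction A rule: infinite_finite_induct) (simp_all add: single_add)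

lemma sum_linform: "(\<Sum>r\<in>A. linform n (a r)) = linform n (\<lambda>k. \<Sum>r\<in>A. a r k)"
proof -
  have "(\<Sum>r\<in>A. linform n (a r)) = (\<Sum>k\<in>{1..n}. \<Sum>r\<in>A. dconst (a r k) * dvar k)"
    unfolding linform_def by (rule sum.swap)
  also have "\<dots> = linform n (\<lambda>k. \<Sum>r\<in>A. a r k)"
    by (simp add: linform_def sum_distrib_right single_sum)
  finally show ?thesis .
qed

lemma linform_diff: "linform n a - linform n b = linform n (\<lambda>k. a k - b k)"
  by (simp add: linform_def single_diff left_diff_distrib sum_subtractf)

lemma dconst_mult_linform: "dconst c * linform n a = linform n (\<lambda>k. c * a k)"
  by (simp add: linform_def sum_distrib_left mult_single flip: mult.assoc)

lemma linform_mult_dconst: "linform n a * dconst c = linform n (\<lambda>k. a k * c)"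
  by (simp add: mult.commute dconst_mult_linform)

lemma pdiff_linform: "r \<in> {1..n} \<Longrightarrow> pdiff r (linform n a) = dconst (a r)"
  by (simp add: linform_def pdiff_sum pdiff_mult pdiff_const pdiff_dvar if_distrib cong: if_cong)

definition Cderiv :: "nat \<Rightarrow> (nat \<Rightarrow> nat \<Rightarrow> nat \<Rightarrow> 'a::comm_ring_1) \<Rightarrow> nat \<Rightarrow> 'a dpoly \<Rightarrow> 'a dpoly" where
  "Cderiv n C \<nu> p = (\<Sum>\<rho>\<in>{1..n}. Cmat n C \<rho> \<nu> * pdiff \<rho> p)"

lemma Cderiv_const: "Cderiv n C \<nu> (dconst c) = 0"
  by (simp add: Cderiv_def pdiff_const)

lemma Cderiv_sum: "Cderiv n C \<nu> (\<Sum>i\<in>A. f i) = (\<Sum>i\<in>A. Cderiv n C \<nu> (f i))"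
  unfolding Cderiv_def pdiff_sum sum_distrib_left by (rule sum.swap)

lemma Cderiv_mult: "Cderiv n C \<nu> (p * q) = Cderiv n C \<nu> p * q + p * Cderiv n C \<nu> q"
  by (simp add: Cderiv_def pdiff_mult distrib_left sum.distrib sum_distrib_left sum_distrib_right mult_ac)

definition mat_commutator :: "'i set \<Rightarrow> ('i \<Rightarrow> 'i \<Rightarrow> 'b::comm_ring) \<Rightarrow> ('i \<Rightarrow> 'i \<Rightarrow> 'b) \<Rightarrow> 'i \<Rightarrow> 'i \<Rightarrow> 'b" where
  "mat_commutator I A M i j = (\<Sum>r\<in>I. A i r * M r j - M i r * A r j)"

lemma mat_commutator_one:
  assumes "finite I" "i \<in> I" "j \<in> I"
  shows "mat_commutator I A (\<lambda>i j. if i = j then 1 else 0) i j = (0::'b::comm_ring_1)"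
proof -
  have "mat_commutator I A (\<lambda>i j. if i = j then 1 else 0) i j
      = (\<Sum>r\<in>I. (if r = j then A i j else 0) - (if r = i then A i j else 0))"
    unfolding mat_commutator_def by (rule sum.cong) auto
  also have "\<dots> = 0"
    using assms by (simp add: sum_subtractf)
  finally show ?thesis .
qed

lemma mat_commutator_mult:
  "mat_commutator I A (\<lambda>i j. \<Sum>k\<in>I. M i k * N k j) i j
     = (\<Sum>k\<in>I. mat_commutator I A M i k * N k j + M i k * mat_commutator I A N k j)"
proof -
  have lhs: "mat_commutator I A (\<lambda>i j. \<Sum>k\<in>I. M i k * N k j) i j
      = (\<Sum>r\<in>I. \<Sum>k\<in>I. A i r * M r k * N k j) - (\<Sum>r\<in>I. \<Sum>k\<in>I. M i k * N k r * A r j)"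
    by (simp add: mat_commutator_def sum_subtractf sum_distrib_left sum_distrib_right mult.assoc)
  have rhs: "(\<Sum>k\<in>I. mat_commutator I A M i k * N k j + M i k * mat_commutator I A N k j)
      = (\<Sum>k\<in>I. \<Sum>r\<in>I. A i r * M r k * N k j) - (\<Sum>k\<in>I. \<Sum>r\<in>I. M i r * A r k * N k j)
      + (\<Sum>k\<in>I. \<Sum>r\<in>I. M i k * A k r * N r j) - (\<Sum>k\<in>I. \<Sum>r\<in>I. M i k * N k r * A r j)"
    by (simp add: mat_commutator_def sum_subtractf sum.distrib sum_distrib_left sum_distrib_right
        left_diff_distrib right_diff_distrib mult.assoc)
  \<comment> \<open>the two middle terms of \<open>rhs\<close> cancel after exchanging the order of summation\<close>
  have "(\<Sum>k\<in>I. \<Sum>r\<in>I. M i r * A r k * N k j) = (\<Sum>k\<in>I. \<Sum>r\<in>I. M i k * A k r * N r j)"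
    and "(\<Sum>k\<in>I. \<Sum>r\<in>I. A i r * M r k * N k j) = (\<Sum>r\<in>I. \<Sum>k\<in>I. A i r * M r k * N k j)"
    and "(\<Sum>k\<in>I. \<Sum>r\<in>I. M i k * N k r * A r j) = (\<Sum>r\<in>I. \<Sum>k\<in>I. M i k * N k r * A r j)"
    by (rule sum.swap)+
  then show ?thesis
    unfolding lhs rhs by simp
qed

context
  fixes n :: nat and C :: "nat \<Rightarrow> nat \<Rightarrow> nat \<Rightarrow> 'a::comm_ring_1"
  assumes antisym: "\<And>i j k. i \<in> {1..n} \<Longrightarrow> j \<in> {1..n} \<Longrightarrow> k \<in> {1..n} \<Longrightarrow> C i j k = - C i k j"
    and jacobi: "\<And>i j k l. i \<in> {1..n} \<Longrightarrow> j \<in> {1..n} \<Longrightarrow> k \<in> {1..n} \<Longrightarrow> l \<in> {1..n} \<Longrightarrow>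
       (\<Sum>\<alpha>\<in>{1..n}. C \<alpha> i j * C l \<alpha> k + C \<alpha> j k * C l \<alpha> i + C \<alpha> k i * C l \<alpha> j) = 0"
begin

lemma ad_commutator:
  assumes "\<mu> \<in> {1..n}" "\<nu> \<in> {1..n}" "\<sigma> \<in> {1..n}" "k \<in> {1..n}"
  shows "(\<Sum>r\<in>{1..n}. C \<sigma> \<mu> r * C r \<nu> k - C \<sigma> \<nu> r * C r \<mu> k) = (\<Sum>r\<in>{1..n}. C r \<mu> \<nu> * C \<sigma> r k)"
proof -
  have "(\<Sum>r\<in>{1..n}. C \<sigma> \<mu> r * C r \<nu> k - C \<sigma> \<nu> r * C r \<mu> k - C r \<mu> \<nu> * C \<sigma> r k)
      = - (\<Sum>r\<in>{1..n}. C r \<nu> k * C \<sigma> r \<mu> + C r k \<mu> * C \<sigma> r \<nu> + C r \<mu> \<nu> * C \<sigma> r k)"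
    unfolding sum_negf[symmetric]
  proof (rule sum.cong[OF refl])
    fix r
    assume "r \<in> {1..n}"
    with assms have "C \<sigma> r \<mu> = - C \<sigma> \<mu> r" "C r k \<mu> = - C r \<mu> k" "C \<sigma> r \<nu> = - C \<sigma> \<nu> r"
      by (simp_all add: antisym[of \<sigma> r \<mu>] antisym[of r k \<mu>] antisym[of \<sigma> r \<nu>])
    then show "C \<sigma> \<mu> r * C r \<nu> k - C \<sigma> \<nu> r * C r \<mu> k - C r \<mu> \<nu> * C \<sigma> r k
        = - (C r \<nu> k * C \<sigma> r \<mu> + C r k \<mu> * C \<sigma> r \<nu> + C r \<mu> \<nu> * C \<sigma> r k)"
      by (simp add: algebra_simps)
  qed
  also have "\<dots> = 0"
    using jacobi[of \<nu> k \<mu> \<sigma>] assms by simp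
  finally show ?thesis
    by (simp add: sum_subtractf)
qed

lemma Cmat_bracket:
  assumes "\<mu> \<in> {1..n}" "\<nu> \<in> {1..n}" "\<sigma> \<in> {1..n}"
  shows "(\<Sum>r\<in>{1..n}. Cmat n C r \<nu> * dconst (C \<sigma> \<mu> r) - Cmat n C r \<mu> * dconst (C \<sigma> \<nu> r))
       = (\<Sum>t\<in>{1..n}. dconst (C t \<mu> \<nu>) * Cmat n C \<sigma> t)"
proof -
  have "(\<Sum>r\<in>{1..n}. Cmat n C r \<nu> * dconst (C \<sigma> \<mu> r) - Cmat n C r \<mu> * dconst (C \<sigma> \<nu> r))
      = linform n (\<lambda>k. \<Sum>r\<in>{1..n}. C r \<nu> k * C \<sigma> \<mu> r - C r \<mu> k * C \<sigma> \<nu> r)"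
    by (simp add: Cmat_eq_linform linform_mult_dconst linform_diff sum_linform)
  also have "\<dots> = linform n (\<lambda>k. \<Sum>t\<in>{1..n}. C t \<mu> \<nu> * C \<sigma> t k)"
    by (rule linform_cong) (use ad_commutator[OF assms] in \<open>simp add: mult.commute\<close>)
  also have "\<dots> = (\<Sum>t\<in>{1..n}. dconst (C t \<mu> \<nu>) * Cmat n C \<sigma> t)"
    by (simp add: Cmat_eq_linform dconst_mult_linform sum_linform)
  finally show ?thesis .
qed

lemma Cderiv_Cmat:
  assumes "\<nu> \<in> {1..n}" "k \<in> {1..n}" "j \<in> {1..n}"
  shows "Cderiv n C \<nu> (Cmat n C k j) = mat_commutator {1..n} (\<lambda>i j. dconst (C i \<nu> j)) (Cmat n C) k j"
proof -
  have "Cderiv n C \<nu> (Cmat n C k j) = (\<Sum>r\<in>{1..n}. Cmat n C r \<nu> * dconst (C k j r))"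
    unfolding Cderiv_def by (rule sum.cong) (simp_all add: Cmat_eq_linform pdiff_linform)
  also have "\<dots> = linform n (\<lambda>m. \<Sum>r\<in>{1..n}. C r \<nu> m * C k j r)"
    by (simp add: Cmat_eq_linform linform_mult_dconst sum_linform)
  also have "\<dots> = linform n (\<lambda>m. \<Sum>r\<in>{1..n}. C k \<nu> r * C r j m - C k r m * C r \<nu> j)"
  proof (rule linform_cong)
    fix m
    assume "m \<in> {1..n}"
    then have "(\<Sum>r\<in>{1..n}. C k \<nu> r * C r j m - C k j r * C r \<nu> m) = (\<Sum>r\<in>{1..n}. C r \<nu> j * C k r m)"
      using assms by (intro ad_commutator)
    then show "(\<Sum>r\<in>{1..n}. C r \<nu> m * C k j r) = (\<Sum>r\<in>{1..n}. C k \<nu> r * C r j m - C k r m * C r \<nu> j)"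
      by (simp add: sum_subtractf algebra_simps)
  qed
  also have "\<dots> = mat_commutator {1..n} (\<lambda>i j. dconst (C i \<nu> j)) (Cmat n C) k j"
    by (simp add: mat_commutator_def Cmat_eq_linform dconst_mult_linform linform_mult_dconst
        linform_diff sum_linform)
  finally show ?thesis .
qed

lemma Cderiv_Cpow:
  assumes "i \<in> {1..n}" "j \<in> {1..n}" "\<nu> \<in> {1..n}"
  shows "Cderiv n C \<nu> (Cpow n C L i j) = mat_commutator {1..n} (\<lambda>i j. dconst (C i \<nu> j)) (Cpow n C L) i j"
  using assms(2)
proof (induction L arbitrary: j)
  case 0
  have "Cpow n C 0 = (\<lambda>i j. if i = j then 1 else 0)"
    by (simp add: fun_eq_iff)
  moreover have "Cderiv n C \<nu> (if i = j then 1 else 0) = 0"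
    using Cderiv_const[of n C \<nu> 1] Cderiv_const[of n C \<nu> 0] by simp
  ultimately show ?case
    using 0 assms(1) by (simp add: mat_commutator_one)
next
  case (Suc L)
  have "Cderiv n C \<nu> (Cpow n C (Suc L) i j)
      = (\<Sum>k\<in>{1..n}. Cderiv n C \<nu> (Cpow n C L i k) * Cmat n C k j + Cpow n C L i k * Cderiv n C \<nu> (Cmat n C k j))"
    by (simp add: Cderiv_sum Cderiv_mult)
  also have "\<dots> = (\<Sum>k\<in>{1..n}. mat_commutator {1..n} (\<lambda>i j. dconst (C i \<nu> j)) (Cpow n C L) i k * Cmat n C k j
      + Cpow n C L i k * mat_commutator {1..n} (\<lambda>i j. dconst (C i \<nu> j)) (Cmat n C) k j)"
  proof (rule sum.cong[OF refl])
    fix k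
    assume "k \<in> {1..n}"
    then show "Cderiv n C \<nu> (Cpow n C L i k) * Cmat n C k j + Cpow n C L i k * Cderiv n C \<nu> (Cmat n C k j)
        = mat_commutator {1..n} (\<lambda>i j. dconst (C i \<nu> j)) (Cpow n C L) i k * Cmat n C k j
          + Cpow n C L i k * mat_commutator {1..n} (\<lambda>i j. dconst (C i \<nu> j)) (Cmat n C) k j"
      using Suc.prems assms(3) by (simp add: Suc.IH Cderiv_Cmat)
  qed
  also have "\<dots> = mat_commutator {1..n} (\<lambda>i j. dconst (C i \<nu> j)) (\<lambda>i j. \<Sum>k\<in>{1..n}. Cpow n C L i k * Cmat n C k j) i j"
    by (rule mat_commutator_mult[symmetric])
  also have "(\<lambda>i j. \<Sum>k\<in>{1..n}. Cpow n C L i k * Cmat n C k j) = Cpow n C (Suc L)"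
    by (simp add: fun_eq_iff)
  finally show ?case .
qed

lemma Cmat_bracket_Cpow:
  assumes "\<mu> \<in> {1..n}" "\<nu> \<in> {1..n}"
  shows "(\<Sum>\<rho>\<in>{1..n}. \<Sum>\<sigma>\<in>{1..n}.
            Cmat n C \<rho> \<nu> * dconst (C \<sigma> \<mu> \<rho>) * Cpow n C L \<gamma> \<sigma>
          - Cmat n C \<rho> \<mu> * dconst (C \<sigma> \<nu> \<rho>) * Cpow n C L \<gamma> \<sigma>)
         = (\<Sum>\<sigma>\<in>{1..n}. dconst (C \<sigma> \<mu> \<nu>) * Cpow n C (Suc L) \<gamma> \<sigma>)"
proof -
  have "(\<Sum>\<rho>\<in>{1..n}. \<Sum>\<sigma>\<in>{1..n}.
            Cmat n C \<rho> \<nu> * dconst (C \<sigma> \<mu> \<rho>) * Cpow n C L \<gamma> \<sigma>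
          - Cmat n C \<rho> \<mu> * dconst (C \<sigma> \<nu> \<rho>) * Cpow n C L \<gamma> \<sigma>)
      = (\<Sum>\<sigma>\<in>{1..n}. (\<Sum>\<rho>\<in>{1..n}. Cmat n C \<rho> \<nu> * dconst (C \<sigma> \<mu> \<rho>)
          - Cmat n C \<rho> \<mu> * dconst (C \<sigma> \<nu> \<rho>)) * Cpow n C L \<gamma> \<sigma>)"
    by (subst sum.swap) (simp add: sum_distrib_right left_diff_distrib)
  also have "\<dots> = (\<Sum>\<sigma>\<in>{1..n}. \<Sum>t\<in>{1..n}. dconst (C t \<mu> \<nu>) * Cmat n C \<sigma> t * Cpow n C L \<gamma> \<sigma>)"
  proof (rule sum.cong[OF refl])
    fix \<sigma>
    assume "\<sigma> \<in> {1..n}"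
    then show "(\<Sum>\<rho>\<in>{1..n}. Cmat n C \<rho> \<nu> * dconst (C \<sigma> \<mu> \<rho>) - Cmat n C \<rho> \<mu> * dconst (C \<sigma> \<nu> \<rho>))
        * Cpow n C L \<gamma> \<sigma> = (\<Sum>t\<in>{1..n}. dconst (C t \<mu> \<nu>) * Cmat n C \<sigma> t * Cpow n C L \<gamma> \<sigma>)"
      using Cmat_bracket[OF assms \<open>\<sigma> \<in> {1..n}\<close>] by (simp add: sum_distrib_right)
  qed
  also have "\<dots> = (\<Sum>t\<in>{1..n}. \<Sum>\<sigma>\<in>{1..n}. dconst (C t \<mu> \<nu>) * (Cpow n C L \<gamma> \<sigma> * Cmat n C \<sigma> t))"
    by (subst sum.swap) (simp only: mult_ac)
  finally show ?thesis
    by (simp add: sum_distrib_left)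
qed

lemma Cderiv_Cpow_bracket:
  assumes "\<mu> \<in> {1..n}" "\<nu> \<in> {1..n}" "\<gamma> \<in> {1..n}"
  shows "(\<Sum>\<rho>\<in>{1..n}. dconst (C \<gamma> \<mu> \<rho>) * Cpow n C L \<rho> \<nu>
            + Cmat n C \<rho> \<nu> * pdiff \<rho> (Cpow n C L \<gamma> \<mu>)
            - dconst (C \<gamma> \<nu> \<rho>) * Cpow n C L \<rho> \<mu>
            - Cmat n C \<rho> \<mu> * pdiff \<rho> (Cpow n C L \<gamma> \<nu>))
         = 2 * (\<Sum>\<sigma>\<in>{1..n}. dconst (C \<sigma> \<mu> \<nu>) * Cpow n C L \<gamma> \<sigma>)"
proof -
  have "(\<Sum>\<rho>\<in>{1..n}. dconst (C \<gamma> \<mu> \<rho>) * Cpow n C L \<rho> \<nu>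
            + Cmat n C \<rho> \<nu> * pdiff \<rho> (Cpow n C L \<gamma> \<mu>)
            - dconst (C \<gamma> \<nu> \<rho>) * Cpow n C L \<rho> \<mu>
            - Cmat n C \<rho> \<mu> * pdiff \<rho> (Cpow n C L \<gamma> \<nu>))
      = (\<Sum>\<rho>\<in>{1..n}. dconst (C \<gamma> \<mu> \<rho>) * Cpow n C L \<rho> \<nu>) + Cderiv n C \<nu> (Cpow n C L \<gamma> \<mu>)
        - (\<Sum>\<rho>\<in>{1..n}. dconst (C \<gamma> \<nu> \<rho>) * Cpow n C L \<rho> \<mu>) - Cderiv n C \<mu> (Cpow n C L \<gamma> \<nu>)"
    by (simp add: Cderiv_def sum.distrib sum_subtractf)
  also have "\<dots> = (\<Sum>\<sigma>\<in>{1..n}. Cpow n C L \<gamma> \<sigma> * dconst (C \<sigma> \<mu> \<nu>) - Cpow n C L \<gamma> \<sigma> * dconst (C \<sigma> \<nu> \<mu>))"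
    unfolding Cderiv_Cpow[OF assms(3,1,2)] Cderiv_Cpow[OF assms(3,2,1)] mat_commutator_def
    by (simp add: sum_subtractf)
  also have "\<dots> = (\<Sum>\<sigma>\<in>{1..n}. 2 * (dconst (C \<sigma> \<mu> \<nu>) * Cpow n C L \<gamma> \<sigma>))"
  proof (rule sum.cong[OF refl])
    fix \<sigma>
    assume "\<sigma> \<in> {1..n}"
    then have "dconst (C \<sigma> \<nu> \<mu>) = - dconst (C \<sigma> \<mu> \<nu>)"
      using assms by (simp add: antisym[of \<sigma> \<nu> \<mu>] single_uminus)
    then show "Cpow n C L \<gamma> \<sigma> * dconst (C \<sigma> \<mu> \<nu>) - Cpow n C L \<gamma> \<sigma> * dconst (C \<sigma> \<nu> \<mu>)
        = 2 * (dconst (C \<sigma> \<mu> \<nu>) * Cpow n C L \<gamma> \<sigma>)"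
      by (simp add: algebra_simps)
  qed
  finally show ?thesis
    by (simp add: sum_distrib_left)
qed

end

theorem mainTheorem2:
  fixes n :: nat and C :: "nat \<Rightarrow> nat \<Rightarrow> nat \<Rightarrow> 'a::comm_ring_1"
  assumes antisym: "\<And>i j k. i \<in> {1..n} \<Longrightarrow> j \<in> {1..n} \<Longrightarrow> k \<in> {1..n} \<Longrightarrow> C i j k = - C i k j"
    and jacobi: "\<And>i j k l. i \<in> {1..n} \<Longrightarrow> j \<in> {1..n} \<Longrightarrow> k \<in> {1..n} \<Longrightarrow> l \<in> {1..n} \<Longrightarrow>
       (\<Sum>\<alpha>\<in>{1..n}. C \<alpha> i j * C l \<alpha> k + C \<alpha> j k * C l \<alpha> i + C \<alpha> k i * C l \<alpha> j) = 0"
    and "\<mu> \<in> {1..n}" and "\<nu> \<in> {1..n}" and "\<gamma> \<in> {1..n}"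
  shows "(\<Sum>\<rho>\<in>{1..n}. \<Sum>\<sigma>\<in>{1..n}.
            Cmat n C \<rho> \<nu> * Poly_Mapping.single 0 (C \<sigma> \<mu> \<rho>) * Cpow n C L \<gamma> \<sigma>
          - Cmat n C \<rho> \<mu> * Poly_Mapping.single 0 (C \<sigma> \<nu> \<rho>) * Cpow n C L \<gamma> \<sigma>)
         = (\<Sum>\<sigma>\<in>{1..n}. Poly_Mapping.single 0 (C \<sigma> \<mu> \<nu>) * Cpow n C (Suc L) \<gamma> \<sigma>)
       \<and> (\<Sum>\<rho>\<in>{1..n}. Poly_Mapping.single 0 (C \<gamma> \<mu> \<rho>) * Cpow n C L \<rho> \<nu>
            + Cmat n C \<rho> \<nu> * pdiff \<rho> (Cpow n C L \<gamma> \<mu>)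
            - Poly_Mapping.single 0 (C \<gamma> \<nu> \<rho>) * Cpow n C L \<rho> \<mu>
            - Cmat n C \<rho> \<mu> * pdiff \<rho> (Cpow n C L \<gamma> \<nu>))
         = 2 * (\<Sum>\<sigma>\<in>{1..n}. Poly_Mapping.single 0 (C \<sigma> \<mu> \<nu>) * Cpow n C L \<gamma> \<sigma>)"
  using Cmat_bracket_Cpow[OF antisym jacobi assms(3,4)]
    Cderiv_Cpow_bracket[OF antisym jacobi assms(3-5)]
  by blast

end
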